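(* Let $\mathcal{R}^{rsc}$ be a rich single-crossing domain and $U\subseteq\mathcal{R}^{rsc}$. If $R_0=\inf_{\prec}U$ exists in $\mathcal{R}^{rsc}$, then $R_0$ belongs to the closure of $U$ in the order topology; likewise, if $R^0=\sup_{\prec}U$ exists, then $R^0$ belongs to the closure of $U$.
   Context: $\mathbb{Z}=[0,\infty)\times[0,1]$. Classical preferences, the single-crossing property, rich single-crossing domains $\mathcal{R}^{rsc}$ and the relation $\prec$ are as follows. A classical preference is a complete transitive relation $R$ on $\mathbb{Z}$ (strict part $P$, indifference $I$) that is strictly decreasing in $t$ for every fixed $q$, strictly increasing in $q$ for every fixed $t$, and has closed upper and lower contour sets. Two distinct classical preferences satisfy single-crossing if any indifference set of one meets any indifference set of the other in at most one point. $\mathcal{R}^{rsc}$ is a set of classical preferences, pairwise single-crossing, such that for all $(t',q'),(t'',q'')$ with $t'<t''$, $q'<q''$ some member is indifferent between them. For distinct $R',R''$, $R'\prec R''$ means that for every $z\in\mathbb{Z}$, $\square(z)\cap\{x:xR''z\}\subseteq\square(z)\cap\{x:xR'z\}$, where $\square(z)=\{x: x=z\text{ or } x<z\}$ and $(t',q')<(t'',q'')$ means $t'<t''$ and $q'<q''$. $\prec$ is a linear order on $\mathcal{R}^{rsc}$; $\inf_\prec,\sup_\prec$ are taken w.r.t. it, and $\mathcal{R}^{rsc}$ carries the order topology. *)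

theory Defs
  imports "HOL-Analysis.Analysis"
begin

type_synonym zbundle = "real \<times> real"
type_synonym pref = "(zbundle \<times> zbundle) set"
  \<comment> \<open>(x, y) \<in> R means x R y, i.e. x is weakly preferred to y\<close>

definition Zset :: "zbundle set" where
  "Zset = {(t, q). 0 \<le> t \<and> 0 \<le> q \<and> q \<le> 1}"

definition indiff :: "pref \<Rightarrow> zbundle \<Rightarrow> zbundle \<Rightarrow> bool" where
  "indiff R x y \<longleftrightarrow> (x, y) \<in> R \<and> (y, x) \<in> R"

definition strict :: "pref \<Rightarrow> zbundle \<Rightarrow> zbundle \<Rightarrow> bool" where
  "strict R x y \<longleftrightarrow> (x, y) \<in> R \<and> (y, x) \<notin> R"

definition classical :: "pref \<Rightarrow> bool" where
  "classical R \<longleftrightarrow>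
     R \<subseteq> Zset \<times> Zset \<and>
     (\<forall>x\<in>Zset. \<forall>y\<in>Zset. (x, y) \<in> R \<or> (y, x) \<in> R) \<and>
     (\<forall>x\<in>Zset. \<forall>y\<in>Zset. \<forall>z\<in>Zset. (x, y) \<in> R \<longrightarrow> (y, z) \<in> R \<longrightarrow> (x, z) \<in> R) \<and>
     (\<forall>t t' q. (t, q) \<in> Zset \<longrightarrow> (t', q) \<in> Zset \<longrightarrow> t < t' \<longrightarrow> strict R (t, q) (t', q)) \<and>
     (\<forall>t q q'. (t, q) \<in> Zset \<longrightarrow> (t, q') \<in> Zset \<longrightarrow> q < q' \<longrightarrow> strict R (t, q') (t, q)) \<and>
     (\<forall>z\<in>Zset. closed {x \<in> Zset. (x, z) \<in> R} \<and> closed {x \<in> Zset. (z, x) \<in> R})"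

definition indiff_set :: "pref \<Rightarrow> zbundle \<Rightarrow> zbundle set" where
  "indiff_set R z = {x \<in> Zset. indiff R x z}"

definition single_crossing :: "pref \<Rightarrow> pref \<Rightarrow> bool" where
  "single_crossing R1 R2 \<longleftrightarrow>
     (\<forall>z1\<in>Zset. \<forall>z2\<in>Zset. \<forall>a b. a \<in> indiff_set R1 z1 \<inter> indiff_set R2 z2 \<longrightarrow>
                               b \<in> indiff_set R1 z1 \<inter> indiff_set R2 z2 \<longrightarrow> a = b)"

definition rich_single_crossing :: "pref set \<Rightarrow> bool" where
  "rich_single_crossing D \<longleftrightarrow>
     (\<forall>R\<in>D. classical R) \<and>
     (\<forall>R1\<in>D. \<forall>R2\<in>D. R1 \<noteq> R2 \<longrightarrow> single_crossing R1 R2) \<and>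
     (\<forall>t1 q1 t2 q2. (t1, q1) \<in> Zset \<longrightarrow> (t2, q2) \<in> Zset \<longrightarrow> t1 < t2 \<longrightarrow> q1 < q2 \<longrightarrow>
        (\<exists>R\<in>D. indiff R (t1, q1) (t2, q2)))"

definition lessZ :: "zbundle \<Rightarrow> zbundle \<Rightarrow> bool" where
  "lessZ x y \<longleftrightarrow> fst x < fst y \<and> snd x < snd y"

definition box :: "zbundle \<Rightarrow> zbundle set" where
  "box z = {x \<in> Zset. x = z \<or> lessZ x z}"

definition prec :: "pref \<Rightarrow> pref \<Rightarrow> bool" where
  "prec R1 R2 \<longleftrightarrow> R1 \<noteq> R2 \<and>
     (\<forall>z\<in>Zset. box z \<inter> {x. (x, z) \<in> R2} \<subseteq> box z \<inter> {x. (x, z) \<in> R1})"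

definition is_inf_prec :: "pref set \<Rightarrow> pref set \<Rightarrow> pref \<Rightarrow> bool" where
  "is_inf_prec D U R0 \<longleftrightarrow> R0 \<in> D \<and> (\<forall>R\<in>U. R0 = R \<or> prec R0 R) \<and>
     (\<forall>L\<in>D. (\<forall>R\<in>U. L = R \<or> prec L R) \<longrightarrow> L = R0 \<or> prec L R0)"

definition is_sup_prec :: "pref set \<Rightarrow> pref set \<Rightarrow> pref \<Rightarrow> bool" where
  "is_sup_prec D U R0 \<longleftrightarrow> R0 \<in> D \<and> (\<forall>R\<in>U. R = R0 \<or> prec R R0) \<and>
     (\<forall>M\<in>D. (\<forall>R\<in>U. R = M \<or> prec R M) \<longrightarrow> R0 = M \<or> prec R0 M)"

definition order_top :: "pref set \<Rightarrow> pref topology" where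
  "order_top D = topology_generated_by
     (insert D ({{R \<in> D. prec R A} | A. A \<in> D} \<union> {{R \<in> D. prec A R} | A. A \<in> D}))"

end

theory Submission
  imports Defs
begin

text \<open>
  Call z separated by (R, S) when some bundle strictly below z is strictly R-better and strictly
  S-worse than z. For distinct single-crossing R and S, at each interior z exactly one of (R, S)
  and (S, R) separates, and each alternative is open; the interior is connected, so the sign is
  the same everywhere, and R \<prec> S means precisely that (S, R) never separates. Hence \<prec> is a
  strict linear order, and richness shows it has no greatest and no least element. In such an
  order an infimum lies in the closure of the set: a basic neighbourhood of the infimum contains
  an interval (a, b) around it, and some member of the set lies strictly below b (the infimum is
  the greatest lower bound) and above the infimum, hence inside the interval. Suprema are
  infima for the converse order, which generates the same topology.
\<close>

section \<open>Strict linear orders and their order topology\<close>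

definition strict_linorder_on :: "'a set \<Rightarrow> ('a \<Rightarrow> 'a \<Rightarrow> bool) \<Rightarrow> bool" where
  "strict_linorder_on D lt \<longleftrightarrow>
     (\<forall>x\<in>D. \<not> lt x x) \<and>
     (\<forall>x\<in>D. \<forall>y\<in>D. \<forall>z\<in>D. lt x y \<longrightarrow> lt y z \<longrightarrow> lt x z) \<and>
     (\<forall>x\<in>D. \<forall>y\<in>D. x \<noteq> y \<longrightarrow> lt x y \<or> lt y x)"

definition order_topology_on :: "'a set \<Rightarrow> ('a \<Rightarrow> 'a \<Rightarrow> bool) \<Rightarrow> 'a topology" where
  "order_topology_on D lt = topology_generated_by
     (insert D ({{x \<in> D. lt x a} | a. a \<in> D} \<union> {{x \<in> D. lt a x} | a. a \<in> D}))"

definition is_inf_on :: "'a set \<Rightarrow> ('a \<Rightarrow> 'a \<Rightarrow> bool) \<Rightarrow> 'a set \<Rightarrow> 'a \<Rightarrow> bool" where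
  "is_inf_on D lt U x \<longleftrightarrow> x \<in> D \<and> (\<forall>u\<in>U. x = u \<or> lt x u) \<and>
     (\<forall>l\<in>D. (\<forall>u\<in>U. l = u \<or> lt l u) \<longrightarrow> l = x \<or> lt l x)"

definition order_nbhd :: "'a set \<Rightarrow> ('a \<Rightarrow> 'a \<Rightarrow> bool) \<Rightarrow> 'a \<Rightarrow> 'a set \<Rightarrow> bool" where
  "order_nbhd D lt x T \<longleftrightarrow> (\<exists>As Bs. finite As \<and> finite Bs \<and> As \<subseteq> D \<and> Bs \<subseteq> D \<and>
     (\<forall>a\<in>As. lt a x) \<and> (\<forall>b\<in>Bs. lt x b) \<and>
     {y \<in> D. (\<forall>a\<in>As. lt a y) \<and> (\<forall>b\<in>Bs. lt y b)} \<subseteq> T)"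

lemma strict_linorder_on_irrefl: "strict_linorder_on D lt \<Longrightarrow> x \<in> D \<Longrightarrow> \<not> lt x x"
  unfolding strict_linorder_on_def by (elim conjE) (erule bspec)

lemma strict_linorder_on_trans:
  "strict_linorder_on D lt \<Longrightarrow> x \<in> D \<Longrightarrow> y \<in> D \<Longrightarrow> z \<in> D \<Longrightarrow> lt x y \<Longrightarrow> lt y z \<Longrightarrow> lt x z"
  unfolding strict_linorder_on_def by meson

lemma strict_linorder_on_total:
  "strict_linorder_on D lt \<Longrightarrow> x \<in> D \<Longrightarrow> y \<in> D \<Longrightarrow> x \<noteq> y \<Longrightarrow> lt x y \<or> lt y x"
  unfolding strict_linorder_on_def by meson

lemma strict_linorder_on_asym:
  "strict_linorder_on D lt \<Longrightarrow> x \<in> D \<Longrightarrow> y \<in> D \<Longrightarrow> lt x y \<Longrightarrow> \<not> lt y x"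
  using strict_linorder_on_irrefl strict_linorder_on_trans by metis

lemma strict_linorder_on_converse:
  assumes "strict_linorder_on D lt"
  shows "strict_linorder_on D (\<lambda>x y. lt y x)"
  unfolding strict_linorder_on_def
  using strict_linorder_on_irrefl[OF assms] strict_linorder_on_trans[OF assms]
    strict_linorder_on_total[OF assms]
  by meson

lemma order_topology_on_converse:
  "order_topology_on D (\<lambda>x y. lt y x) = order_topology_on D lt"
  unfolding order_topology_on_def by (simp add: Un_commute)

lemma topspace_order_topology_on [simp]: "topspace (order_topology_on D lt) = D"
  unfolding order_topology_on_def by auto

lemma order_nbhdE:
  assumes "order_nbhd D lt x T"
  obtains As Bs where "finite As" "finite Bs" "As \<subseteq> D" "Bs \<subseteq> D"
    "\<forall>a\<in>As. lt a x" "\<forall>b\<in>Bs. lt x b"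
    "{y \<in> D. (\<forall>a\<in>As. lt a y) \<and> (\<forall>b\<in>Bs. lt y b)} \<subseteq> T"
  using assms unfolding order_nbhd_def by blast

lemma order_nbhdI:
  "finite As \<Longrightarrow> finite Bs \<Longrightarrow> As \<subseteq> D \<Longrightarrow> Bs \<subseteq> D \<Longrightarrow>
    \<forall>a\<in>As. lt a x \<Longrightarrow> \<forall>b\<in>Bs. lt x b \<Longrightarrow>
    {y \<in> D. (\<forall>a\<in>As. lt a y) \<and> (\<forall>b\<in>Bs. lt y b)} \<subseteq> T \<Longrightarrow> order_nbhd D lt x T"
  unfolding order_nbhd_def by blast

lemma order_nbhd_Int:
  assumes "order_nbhd D lt x S" "order_nbhd D lt x T"
  shows "order_nbhd D lt x (S \<inter> T)"
proof -
  obtain As Bs where As: "finite As" "As \<subseteq> D" "\<forall>a\<in>As. lt a x"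
      and Bs: "finite Bs" "Bs \<subseteq> D" "\<forall>b\<in>Bs. lt x b"
      and S: "{y \<in> D. (\<forall>a\<in>As. lt a y) \<and> (\<forall>b\<in>Bs. lt y b)} \<subseteq> S"
    using assms(1) by (rule order_nbhdE)
  obtain As' Bs' where As': "finite As'" "As' \<subseteq> D" "\<forall>a\<in>As'. lt a x"
      and Bs': "finite Bs'" "Bs' \<subseteq> D" "\<forall>b\<in>Bs'. lt x b"
      and T: "{y \<in> D. (\<forall>a\<in>As'. lt a y) \<and> (\<forall>b\<in>Bs'. lt y b)} \<subseteq> T"
    using assms(2) by (rule order_nbhdE)
  show ?thesis
  proof (rule order_nbhdI[of "As \<union> As'" "Bs \<union> Bs'"])
    show "{y \<in> D. (\<forall>a\<in>As \<union> As'. lt a y) \<and> (\<forall>b\<in>Bs \<union> Bs'. lt y b)} \<subseteq> S \<inter> T"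
      using S T by blast
  qed (use As Bs As' Bs' in auto)
qed

lemma order_nbhd_mono: "order_nbhd D lt x S \<Longrightarrow> S \<subseteq> T \<Longrightarrow> order_nbhd D lt x T"
  unfolding order_nbhd_def by (meson order_trans)

lemma openin_order_topology_on_nbhd:
  assumes "openin (order_topology_on D lt) T" and "x \<in> T"
  shows "order_nbhd D lt x T"
proof -
  have "generate_topology_on
      (insert D ({{x \<in> D. lt x a} | a. a \<in> D} \<union> {{x \<in> D. lt a x} | a. a \<in> D})) T"
    using assms(1) openin_topology_generated_by unfolding order_topology_on_def by blast
  then show ?thesis
    using assms(2)
  proof (induction rule: generate_topology_on.induct)
    case Empty
    then show ?case by simp
  next
    case (Int S T)
    then show ?case by (simp add: order_nbhd_Int)
  next
    case (UN K)
    then obtain S where "S \<in> K" "order_nbhd D lt x S" by blast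
    then show ?case using order_nbhd_mono by (meson Union_upper)
  next
    case (Basis S)
    have "S = D \<or> (\<exists>a. a \<in> D \<and> S = {x \<in> D. lt x a}) \<or> (\<exists>a. a \<in> D \<and> S = {x \<in> D. lt a x})"
      using Basis.hyps by auto
    then consider "S = D" | a where "a \<in> D" "S = {x \<in> D. lt x a}"
      | a where "a \<in> D" "S = {x \<in> D. lt a x}" by blast
    then show ?case
    proof cases
      case 1
      then show ?thesis by (intro order_nbhdI[of "{}" "{}"]) auto
    next
      case 2
      then show ?thesis using Basis.prems by (intro order_nbhdI[of "{}" "{a}"]) auto
    next
      case 3
      then show ?thesis using Basis.prems by (intro order_nbhdI[of "{a}" "{}"]) auto
    qed
  qed
qed

lemma
  assumes "is_inf_on D lt U x"
  shows is_inf_on_mem: "x \<in> D"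
    and is_inf_on_lower: "u \<in> U \<Longrightarrow> x = u \<or> lt x u"
    and is_inf_on_greatest: "l \<in> D \<Longrightarrow> \<forall>u\<in>U. l = u \<or> lt l u \<Longrightarrow> l = x \<or> lt l x"
  using assms unfolding is_inf_on_def by blast+

lemma inf_approx_from_above:
  assumes lin: "strict_linorder_on D lt" and U: "U \<subseteq> D" "U \<noteq> {}"
    and inf: "is_inf_on D lt U x"
    and "finite Bs" "Bs \<subseteq> D" "\<forall>b\<in>Bs. lt x b"
  shows "\<exists>u\<in>U. \<forall>b\<in>Bs. lt u b"
  using assms(5-7)
proof (induction Bs rule: finite_induct)
  case empty
  then show ?case using U by blast
next
  case (insert b Bs)
  then obtain u where u: "u \<in> U" "\<forall>b'\<in>Bs. lt u b'" by auto
  have b: "b \<in> D" "lt x b" using insert.prems by auto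
  have x: "x \<in> D" using inf by (rule is_inf_on_mem)
  obtain v where v: "v \<in> U" "lt v b"
  proof -
    have "\<not> (b = x \<or> lt b x)"
      using strict_linorder_on_irrefl[OF lin] strict_linorder_on_asym[OF lin] b x by blast
    then obtain v where "v \<in> U" "\<not> (b = v \<or> lt b v)"
      using is_inf_on_greatest[OF inf] b by blast
    then show thesis using that strict_linorder_on_total[OF lin] b U by blast
  qed
  have "u \<in> D" "v \<in> D" using u v U by auto
  then consider "u = v" | "lt u v" | "lt v u" using strict_linorder_on_total[OF lin] by blast
  then show ?case
  proof cases
    case 1
    then show ?thesis using u v by blast
  next
    case 2
    then show ?thesis using u v b \<open>u \<in> D\<close> \<open>v \<in> D\<close> strict_linorder_on_trans[OF lin] by blast
  next
    case 3
    then show ?thesis using u v insert.prems \<open>u \<in> D\<close> \<open>v \<in> D\<close> strict_linorder_on_trans[OF lin]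
      by blast
  qed
qed

lemma inf_in_order_closure:
  assumes lin: "strict_linorder_on D lt" and no_greatest: "\<forall>x\<in>D. \<exists>y\<in>D. lt x y"
    and U: "U \<subseteq> D" and inf: "is_inf_on D lt U x"
  shows "x \<in> order_topology_on D lt closure_of U"
proof -
  have x: "x \<in> D" using inf by (rule is_inf_on_mem)
  have "U \<noteq> {}"
  proof
    assume "U = {}"
    obtain y where "y \<in> D" "lt x y" using no_greatest x by blast
    moreover have "y = x \<or> lt y x" using is_inf_on_greatest[OF inf \<open>y \<in> D\<close>] \<open>U = {}\<close> by blast
    ultimately show False
      using strict_linorder_on_irrefl[OF lin x] strict_linorder_on_asym[OF lin x] by blast
  qed
  show ?thesis
    unfolding in_closure_of topspace_order_topology_on
  proof (intro conjI x allI impI)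
    fix T assume T: "x \<in> T \<and> openin (order_topology_on D lt) T"
    then have "order_nbhd D lt x T" by (intro openin_order_topology_on_nbhd) auto
    then obtain As Bs where nbhd: "finite As" "finite Bs" "As \<subseteq> D" "Bs \<subseteq> D"
        "\<forall>a\<in>As. lt a x" "\<forall>b\<in>Bs. lt x b"
        "{y \<in> D. (\<forall>a\<in>As. lt a y) \<and> (\<forall>b\<in>Bs. lt y b)} \<subseteq> T"
      by (rule order_nbhdE)
    show "\<exists>y. y \<in> U \<and> y \<in> T"
    proof (cases "x \<in> U")
      case True
      then show ?thesis using T by blast
    next
      case False
      obtain u where u: "u \<in> U" "\<forall>b\<in>Bs. lt u b"
        using inf_approx_from_above[OF lin U \<open>U \<noteq> {}\<close> inf nbhd(2,4,6)] by blast
      have "lt x u" using is_inf_on_lower[OF inf u(1)] u False by blast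
      then have "\<forall>a\<in>As. lt a u"
        using strict_linorder_on_trans[OF lin] nbhd(3,5) x u U by blast
      then show ?thesis using u nbhd(7) U by blast
    qed
  qed
qed

section \<open>Classical preferences\<close>

lemma Zset_iff [simp]: "(t, q) \<in> Zset \<longleftrightarrow> 0 \<le> t \<and> 0 \<le> q \<and> q \<le> 1"
  unfolding Zset_def by auto

lemma classical_total: "classical R \<Longrightarrow> x \<in> Zset \<Longrightarrow> y \<in> Zset \<Longrightarrow> (x, y) \<in> R \<or> (y, x) \<in> R"
  unfolding classical_def by blast

lemma classical_refl: "classical R \<Longrightarrow> x \<in> Zset \<Longrightarrow> (x, x) \<in> R"
  using classical_total by blast

lemma classical_trans:
  assumes "classical R" "(x, y) \<in> R" "(y, z) \<in> R"
  shows "(x, z) \<in> R"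
proof -
  have "x \<in> Zset" "y \<in> Zset" "z \<in> Zset"
    using assms unfolding classical_def by auto
  then show ?thesis using assms unfolding classical_def by blast
qed

lemma classical_prefers_lower_t:
  "classical R \<Longrightarrow> (t, q) \<in> Zset \<Longrightarrow> (t', q) \<in> Zset \<Longrightarrow> t < t' \<Longrightarrow> strict R (t, q) (t', q)"
  unfolding classical_def by blast

lemma classical_prefers_higher_q:
  "classical R \<Longrightarrow> (t, q) \<in> Zset \<Longrightarrow> (t, q') \<in> Zset \<Longrightarrow> q < q' \<Longrightarrow> strict R (t, q') (t, q)"
  unfolding classical_def by blast

lemma classical_closed_upper: "classical R \<Longrightarrow> z \<in> Zset \<Longrightarrow> closed {x \<in> Zset. (x, z) \<in> R}"
  unfolding classical_def by blast

lemma classical_closed_lower: "classical R \<Longrightarrow> z \<in> Zset \<Longrightarrow> closed {x \<in> Zset. (z, x) \<in> R}"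
  unfolding classical_def by blast

lemma strict_Zset: "classical R \<Longrightarrow> strict R x y \<Longrightarrow> x \<in> Zset \<and> y \<in> Zset"
  unfolding classical_def strict_def by auto

lemma strict_weak_trans: "classical R \<Longrightarrow> strict R x y \<Longrightarrow> (y, z) \<in> R \<Longrightarrow> strict R x z"
  unfolding strict_def by (meson classical_trans)

lemma weak_strict_trans: "classical R \<Longrightarrow> (x, y) \<in> R \<Longrightarrow> strict R y z \<Longrightarrow> strict R x z"
  unfolding strict_def by (meson classical_trans)

lemma strict_if_not_weak:
  "classical R \<Longrightarrow> x \<in> Zset \<Longrightarrow> y \<in> Zset \<Longrightarrow> (x, y) \<notin> R \<Longrightarrow> strict R y x"
  unfolding strict_def using classical_total by blast

lemma classical_weak_dominance:
  assumes c: "classical R" and "(t, q) \<in> Zset" "(t', q') \<in> Zset" "t \<le> t'" "q' \<le> q"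
  shows "((t, q), (t', q')) \<in> R"
proof -
  have "((t, q), (t, q')) \<in> R"
    using classical_refl[OF c] classical_prefers_higher_q[OF c, of t q' q] assms
    by (cases "q' = q") (auto simp: strict_def)
  moreover have "((t, q'), (t', q')) \<in> R"
    using classical_refl[OF c] classical_prefers_lower_t[OF c, of t q' t'] assms
    by (cases "t = t'") (auto simp: strict_def)
  ultimately show ?thesis using classical_trans[OF c] by blast
qed

lemma strict_above_nbhd:
  assumes c: "classical R" and z: "z \<in> Zset" and "strict R p z"
  shows "\<exists>e>0. \<forall>y\<in>Zset. dist y p < e \<longrightarrow> strict R y z"
proof -
  have "open (- {x \<in> Zset. (z, x) \<in> R})" using classical_closed_lower[OF c z] by auto
  moreover have "p \<in> - {x \<in> Zset. (z, x) \<in> R}" using assms(3) unfolding strict_def by auto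
  ultimately obtain e where e: "e > 0" "ball p e \<subseteq> - {x \<in> Zset. (z, x) \<in> R}"
    using open_contains_ball by blast
  show ?thesis
  proof (intro exI[of _ e] conjI ballI impI)
    fix y assume y: "y \<in> Zset" "dist y p < e"
    then have "(z, y) \<notin> R" using e by (auto simp: dist_commute)
    then show "strict R y z" using strict_if_not_weak[OF c z] y by blast
  qed (use e in auto)
qed

lemma strict_below_nbhd:
  assumes c: "classical R" and z: "z \<in> Zset" and "strict R z p"
  shows "\<exists>e>0. \<forall>y\<in>Zset. dist y p < e \<longrightarrow> strict R z y"
proof -
  have "open (- {x \<in> Zset. (x, z) \<in> R})" using classical_closed_upper[OF c z] by auto
  moreover have "p \<in> - {x \<in> Zset. (x, z) \<in> R}" using assms(3) unfolding strict_def by auto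
  ultimately obtain e where e: "e > 0" "ball p e \<subseteq> - {x \<in> Zset. (x, z) \<in> R}"
    using open_contains_ball by blast
  show ?thesis
  proof (intro exI[of _ e] conjI ballI impI)
    fix y assume y: "y \<in> Zset" "dist y p < e"
    then have "(y, z) \<notin> R" using e by (auto simp: dist_commute)
    then show "strict R z y" using strict_if_not_weak[OF c _ z] y by blast
  qed (use e in auto)
qed

lemma row_indifference_point:
  assumes c: "classical R" and z: "(a, b) \<in> Zset" and q: "0 \<le> q" "q < b"
    and better: "strict R (0, q) (a, b)"
  shows "\<exists>t. 0 < t \<and> t < a \<and> indiff R (t, q) (a, b)"
proof -
  have row: "(s, q) \<in> Zset \<longleftrightarrow> 0 \<le> s" for s using z q by auto
  have worse: "strict R (a, b) (a, q)"
    using classical_prefers_higher_q[OF c] z q row by simp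
  define S where "S = {s \<in> {0..a}. ((s, q), (a, b)) \<in> R}"
  have Seq: "S = {0..a} \<inter> (\<lambda>s. (s, q)) -` {x \<in> Zset. (x, (a, b)) \<in> R}"
    unfolding S_def using row by auto
  have "closed S"
    unfolding Seq by (intro closed_Int closed_vimage classical_closed_upper[OF c z] continuous_intros)
  moreover have "0 \<in> S" "bdd_above S"
    using better worse z unfolding S_def strict_def by auto
  ultimately have thS: "Sup S \<in> S" and ub: "\<And>s. s \<in> S \<Longrightarrow> s \<le> Sup S"
    using closed_contains_Sup[of S] cSup_upper[of _ S] by auto
  define t where "t = Sup S"
  have "t \<noteq> a" using thS worse unfolding t_def S_def strict_def by auto
  then have "t < a" using thS unfolding t_def S_def by auto
  have "\<not> strict R (t, q) (a, b)"
  proof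
    assume "strict R (t, q) (a, b)"
    then obtain e where e: "e > 0" "\<forall>y\<in>Zset. dist y (t, q) < e \<longrightarrow> strict R y (a, b)"
      using strict_above_nbhd[OF c z] by blast
    define s where "s = t + min (e / 2) (a - t)"
    have "t < s" "s \<le> a" "dist (s, q) (t, q) < e"
      using e \<open>t < a\<close> by (auto simp: s_def dist_Pair_Pair dist_real_def)
    moreover have "(s, q) \<in> Zset" using \<open>t < s\<close> thS row unfolding S_def t_def by auto
    ultimately have "strict R (s, q) (a, b)" using e by blast
    then have "s \<in> S" using \<open>t < s\<close> \<open>s \<le> a\<close> thS unfolding S_def t_def strict_def by auto
    then show False using ub \<open>t < s\<close> unfolding t_def by fastforce
  qed
  then have indiff: "indiff R (t, q) (a, b)"
    using thS unfolding t_def S_def strict_def indiff_def by auto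
  then have "t \<noteq> 0" using better unfolding indiff_def strict_def by auto
  moreover have "0 \<le> t" using thS unfolding t_def S_def by auto
  ultimately have "0 < t" by simp
  then show ?thesis using indiff \<open>t < a\<close> by blast
qed

section \<open>Separation and the order \<prec>\<close>

lemma connected_pred_split:
  fixes S :: "'a::metric_space set"
  assumes "connected S" and cover: "\<forall>x\<in>S. P x \<or> Q x" and disj: "\<forall>x\<in>S. \<not> (P x \<and> Q x)"
    and "\<forall>x\<in>S. P x \<longrightarrow> (\<exists>e>0. \<forall>y\<in>S. dist y x < e \<longrightarrow> P y)"
    and "\<forall>x\<in>S. Q x \<longrightarrow> (\<exists>e>0. \<forall>y\<in>S. dist y x < e \<longrightarrow> Q y)"
  shows "(\<forall>x\<in>S. P x) \<or> (\<forall>x\<in>S. Q x)"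
proof -
  have "openin (top_of_set S) {x \<in> S. P x}" "openin (top_of_set S) {x \<in> S. Q x}"
    using assms(4,5) by (auto simp: openin_euclidean_subtopology_iff)
  moreover have "S \<subseteq> {x \<in> S. P x} \<union> {x \<in> S. Q x}" "{x \<in> S. P x} \<inter> {x \<in> S. Q x} = {}"
    using cover disj by auto
  ultimately have "{x \<in> S. P x} = {} \<or> {x \<in> S. Q x} = {}"
    using \<open>connected S\<close> unfolding connected_openin by blast
  then show ?thesis using cover by auto
qed

lemma single_crossing_sym: "single_crossing R S \<Longrightarrow> single_crossing S R"
  unfolding single_crossing_def by blast

lemma single_crossing_unique:
  assumes c: "classical R" "classical S" and sc: "single_crossing R S"
    and z: "z \<in> Zset" and "y \<in> Zset" "indiff R y z" "indiff S y z"
  shows "y = z"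
proof -
  have "z \<in> indiff_set R z \<inter> indiff_set S z"
    using z classical_refl[OF c(1) z] classical_refl[OF c(2) z]
    unfolding indiff_set_def indiff_def by auto
  moreover have "y \<in> indiff_set R z \<inter> indiff_set S z"
    using assms unfolding indiff_set_def by auto
  ultimately show ?thesis using sc z unfolding single_crossing_def by blast
qed

definition row_separates :: "pref \<Rightarrow> pref \<Rightarrow> zbundle \<Rightarrow> real \<Rightarrow> bool" where
  "row_separates R S z q \<longleftrightarrow> (\<exists>t. 0 \<le> t \<and> t < fst z \<and> strict R (t, q) z \<and> strict S z (t, q))"

definition separates :: "pref \<Rightarrow> pref \<Rightarrow> zbundle \<Rightarrow> bool" where
  "separates R S z \<longleftrightarrow> (\<exists>x\<in>Zset. lessZ x z \<and> strict R x z \<and> strict S z x)"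

lemma separates_if_row_separates:
  assumes "classical R" "row_separates R S z q" "q < snd z"
  shows "separates R S z"
proof -
  obtain t where t: "t < fst z" "strict R (t, q) z" "strict S z (t, q)"
    using assms(2) unfolding row_separates_def by blast
  moreover have "(t, q) \<in> Zset" using strict_Zset[OF assms(1) t(2)] by blast
  ultimately show ?thesis
    unfolding separates_def lessZ_def using assms(3) by (intro bexI[of _ "(t, q)"]) auto
qed

lemma row_separates_either:
  assumes c: "classical R" "classical S" and sc: "single_crossing R S"
    and z: "(a, b) \<in> Zset" and q: "0 \<le> q" "q < b" and better: "strict R (0, q) (a, b)"
  shows "row_separates R S (a, b) q \<or> row_separates S R (a, b) q"
proof -
  obtain t where t: "0 < t" "t < a" "indiff R (t, q) (a, b)"
    using row_indifference_point[OF c(1) z q better] by blast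
  have q1: "q \<le> 1" using z q by auto
  have "(t, q) \<in> Zset" using q q1 t by simp
  then have "\<not> indiff S (t, q) (a, b)"
    using single_crossing_unique[OF c sc z _ t(3)] t by auto
  then consider "strict S (t, q) (a, b)" | "strict S (a, b) (t, q)"
    using classical_total[OF c(2), of "(t, q)" "(a, b)"] z q q1 t
    unfolding strict_def indiff_def by auto
  then show ?thesis
  proof cases
    case 1
    then obtain e where e: "e > 0" "\<forall>y\<in>Zset. dist y (t, q) < e \<longrightarrow> strict S y (a, b)"
      using strict_above_nbhd[OF c(2) z] by blast
    define d where "d = min (e / 2) ((a - t) / 2)"
    have "0 < d" "d \<le> e / 2" "d \<le> (a - t) / 2" using e t by (auto simp: d_def min_def)
    then have s: "t < t + d" "t + d < a" "dist (t + d, q) (t, q) < e"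
      using e t by (auto simp: dist_Pair_Pair dist_real_def)
    then have "strict S (t + d, q) (a, b)" using e q q1 t by auto
    moreover have "strict R (a, b) (t + d, q)"
    proof -
      have "strict R (t, q) (t + d, q)" using classical_prefers_lower_t[OF c(1)] s(1) t q q1 by simp
      then show ?thesis using weak_strict_trans[OF c(1)] t(3) unfolding indiff_def by blast
    qed
    ultimately have "row_separates S R (a, b) q"
      unfolding row_separates_def using s t by (intro exI[of _ "t + d"]) auto
    then show ?thesis by blast
  next
    case 2
    then obtain e where e: "e > 0" "\<forall>y\<in>Zset. dist y (t, q) < e \<longrightarrow> strict S (a, b) y"
      using strict_below_nbhd[OF c(2) z] by blast
    define d where "d = min (e / 2) (t / 2)"
    have "0 < d" "d \<le> e / 2" "d \<le> t / 2" using e t by (auto simp: d_def min_def)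
    then have s: "0 < t - d" "t - d < t" "dist (t - d, q) (t, q) < e"
      using e t by (auto simp: dist_Pair_Pair dist_real_def)
    then have "strict S (a, b) (t - d, q)" using e q q1 by auto
    moreover have "strict R (t - d, q) (a, b)"
    proof -
      have "strict R (t - d, q) (t, q)" using classical_prefers_lower_t[OF c(1)] s t q q1 by simp
      then show ?thesis using strict_weak_trans[OF c(1)] t(3) unfolding indiff_def by blast
    qed
    ultimately have "row_separates R S (a, b) q"
      unfolding row_separates_def using s t by (intro exI[of _ "t - d"]) auto
    then show ?thesis by blast
  qed
qed

lemma row_separates_not_both:
  assumes c: "classical R" "classical S"
  shows "\<not> (row_separates R S z q \<and> row_separates S R z q)"
proof
  assume "row_separates R S z q \<and> row_separates S R z q"
  then obtain a b where a: "strict R (a, q) z" "strict S z (a, q)"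
    and b: "strict S (b, q) z" "strict R z (b, q)"
    unfolding row_separates_def by blast
  have Z: "(a, q) \<in> Zset" "(b, q) \<in> Zset" using a b strict_Zset[OF c(1)] by blast+
  consider "a < b" | "a = b" | "b < a" by linarith
  then show False
  proof cases
    case 1
    then have "strict S (a, q) z"
      using strict_weak_trans[OF c(2) classical_prefers_lower_t[OF c(2) Z 1]] b(1)
      unfolding strict_def by blast
    then show False using a(2) unfolding strict_def by blast
  next
    case 2
    then show False using a b unfolding strict_def by blast
  next
    case 3
    then have "strict R (b, q) z"
      using strict_weak_trans[OF c(1) classical_prefers_lower_t[OF c(1) Z(2,1) 3]] a(1)
      unfolding strict_def by blast
    then show False using b(2) unfolding strict_def by blast
  qed
qed

lemma row_separates_nbhd:
  assumes c: "classical R" "classical S" and z: "z \<in> Zset" and "row_separates R S z q"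
  shows "\<exists>e>0. \<forall>p. 0 \<le> p \<longrightarrow> p \<le> 1 \<longrightarrow> dist p q < e \<longrightarrow> row_separates R S z p"
proof -
  obtain t where t: "0 \<le> t" "t < fst z" "strict R (t, q) z" "strict S z (t, q)"
    using assms(4) unfolding row_separates_def by blast
  obtain e1 where e1: "e1 > 0" "\<forall>w\<in>Zset. dist w (t, q) < e1 \<longrightarrow> strict R w z"
    using strict_above_nbhd[OF c(1) z t(3)] by blast
  obtain e2 where e2: "e2 > 0" "\<forall>w\<in>Zset. dist w (t, q) < e2 \<longrightarrow> strict S z w"
    using strict_below_nbhd[OF c(2) z t(4)] by blast
  show ?thesis
  proof (intro exI[of _ "min e1 e2"] conjI allI impI)
    fix p assume p: "0 \<le> p" "p \<le> 1" "dist p q < min e1 e2"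
    then have "(t, p) \<in> Zset" "dist (t, p) (t, q) < e1" "dist (t, p) (t, q) < e2"
      using t by (auto simp: dist_Pair_Pair)
    then show "row_separates R S z p" unfolding row_separates_def using t e1 e2 by blast
  qed (use e1 e2 in auto)
qed

lemma not_separates_both:
  assumes c: "classical R" "classical S" and sc: "single_crossing R S" and z: "(a, b) \<in> Zset"
  shows "\<not> (separates R S (a, b) \<and> separates S R (a, b))"
proof
  assume "separates R S (a, b) \<and> separates S R (a, b)"
  then obtain x1 x2 where x1: "x1 \<in> Zset" "lessZ x1 (a, b)" "strict R x1 (a, b)" "strict S (a, b) x1"
    and x2: "x2 \<in> Zset" "lessZ x2 (a, b)" "strict S x2 (a, b)" "strict R (a, b) x2"
    unfolding separates_def by blast
  obtain t1 q1 t2 q2 where x12: "x1 = (t1, q1)" "x2 = (t2, q2)" by (cases x1, cases x2)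
  txt \<open>Along the rows between q1 and q2 the direction of separation is defined and locally
    constant, yet it differs at q1 and at q2.\<close>
  define I where "I = {min q1 q2 .. max q1 q2}"
  have I: "0 \<le> q \<and> q < b \<and> q \<le> 1" if "q \<in> I" for q
    using that x1 x2 z unfolding I_def x12 lessZ_def by auto
  have row_sep: "row_separates R S (a, b) q1" "row_separates S R (a, b) q2"
    using x1 x2 unfolding x12 row_separates_def lessZ_def by auto
  have cover: "row_separates R S (a, b) q \<or> row_separates S R (a, b) q" if "q \<in> I" for q
  proof (cases "q1 \<le> q")
    case True
    then have "strict R (0, q) (a, b)"
      using weak_strict_trans[OF c(1) classical_weak_dominance[OF c(1)] x1(3)[unfolded x12]]
        x1 I[OF that] unfolding x12 lessZ_def by auto
    then show ?thesis using row_separates_either[OF c sc z] I[OF that] by blast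
  next
    case False
    then have "q2 \<le> q" using that unfolding I_def by auto
    then have "strict S (0, q) (a, b)"
      using weak_strict_trans[OF c(2) classical_weak_dominance[OF c(2)] x2(3)[unfolded x12]]
        x2 I[OF that] unfolding x12 lessZ_def by auto
    then show ?thesis
      using row_separates_either[OF c(2,1) single_crossing_sym[OF sc] z] I[OF that]
      by blast
  qed
  have nbhd: "\<exists>e>0. \<forall>p\<in>I. dist p q < e \<longrightarrow> row_separates R' S' (a, b) p"
    if c': "classical R'" "classical S'" and sep': "row_separates R' S' (a, b) q" for R' S' q
  proof -
    obtain e where "e > 0" "\<forall>p. 0 \<le> p \<longrightarrow> p \<le> 1 \<longrightarrow> dist p q < e \<longrightarrow> row_separates R' S' (a, b) p"
      using row_separates_nbhd[OF c' z sep'] by blast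
    then show ?thesis using I by blast
  qed
  have "(\<forall>q\<in>I. row_separates R S (a, b) q) \<or> (\<forall>q\<in>I. row_separates S R (a, b) q)"
  proof (rule connected_pred_split)
    show "connected I" unfolding I_def by simp
  qed (use cover row_separates_not_both[OF c] nbhd[OF c] nbhd[OF c(2,1)] in blast)+
  moreover have "q1 \<in> I" "q2 \<in> I" unfolding I_def by auto
  ultimately show False using row_sep row_separates_not_both[OF c] by blast
qed

lemma separates_either:
  assumes c: "classical R" "classical S" and sc: "single_crossing R S"
    and z: "(a, b) \<in> Zset" and pos: "0 < a" "0 < b"
  shows "separates R S (a, b) \<or> separates S R (a, b)"
proof -
  have "strict R (0, b) (a, b)" using classical_prefers_lower_t[OF c(1)] z pos by simp
  then obtain e where e: "e > 0" "\<forall>y\<in>Zset. dist y (0, b) < e \<longrightarrow> strict R y (a, b)"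
    using strict_above_nbhd[OF c(1) z] by blast
  define d where "d = min (e / 2) (b / 2)"
  have "0 < d" "d \<le> e / 2" "d \<le> b / 2" using e pos by (auto simp: d_def min_def)
  then have q: "0 \<le> b - d" "b - d < b" "dist (0, b - d) (0, b) < e"
    using e by (auto simp: dist_Pair_Pair dist_real_def)
  then have "strict R (0, b - d) (a, b)" using e z by auto
  then have "row_separates R S (a, b) (b - d) \<or> row_separates S R (a, b) (b - d)"
    using row_separates_either[OF c sc z q(1,2)] by blast
  then show ?thesis using separates_if_row_separates c q(2) by auto
qed

lemma separates_nbhd:
  assumes c: "classical R" "classical S" and z: "z \<in> Zset" and "separates R S z"
  shows "\<exists>e>0. \<forall>y\<in>Zset. dist y z < e \<longrightarrow> separates R S y"
proof -
  obtain x where x: "x \<in> Zset" "lessZ x z" "strict R x z" "strict S z x"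
    using assms(4) unfolding separates_def by blast
  obtain e1 where e1: "e1 > 0" "\<forall>w\<in>Zset. dist w z < e1 \<longrightarrow> strict R x w"
    using strict_below_nbhd[OF c(1) x(1,3)] by blast
  obtain e2 where e2: "e2 > 0" "\<forall>w\<in>Zset. dist w z < e2 \<longrightarrow> strict S w x"
    using strict_above_nbhd[OF c(2) x(1,4)] by blast
  define e3 where "e3 = min (fst z - fst x) (snd z - snd x)"
  have e3: "e3 > 0" unfolding e3_def using x(2) by (auto simp: lessZ_def)
  show ?thesis
  proof (intro exI[of _ "min (min e1 e2) e3"] conjI ballI impI)
    fix y assume y: "y \<in> Zset" "dist y z < min (min e1 e2) e3"
    have "dist (fst y) (fst z) < e3" "dist (snd y) (snd z) < e3"
      using y(2) dist_fst_le[of y z] dist_snd_le[of y z] by auto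
    then have "lessZ x y" unfolding lessZ_def e3_def dist_real_def by auto
    then show "separates R S y" unfolding separates_def using x(1) e1 e2 y by auto
  qed (use e1 e2 e3 in auto)
qed

lemma not_separates_if_prec:
  assumes "prec R S" "z \<in> Zset"
  shows "\<not> separates S R z"
proof
  assume "separates S R z"
  then obtain x where x: "x \<in> Zset" "lessZ x z" "strict S x z" "strict R z x"
    unfolding separates_def by blast
  then have "x \<in> box z \<inter> {x. (x, z) \<in> S}" unfolding box_def strict_def by auto
  then have "(x, z) \<in> R" using assms unfolding prec_def by blast
  then show False using x(4) unfolding strict_def by blast
qed

lemma prec_if_not_separates:
  assumes c: "classical R" "classical S" and "R \<noteq> S"
    and never: "\<forall>z\<in>Zset. 0 < fst z \<longrightarrow> 0 < snd z \<longrightarrow> \<not> separates S R z"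
  shows "prec R S"
  unfolding prec_def
proof (intro conjI \<open>R \<noteq> S\<close> ballI subsetI)
  fix z x assume z: "z \<in> Zset" and "x \<in> box z \<inter> {x. (x, z) \<in> S}"
  then have x: "x \<in> Zset" "x = z \<or> lessZ x z" "(x, z) \<in> S" unfolding box_def by auto
  have "(x, z) \<in> R"
  proof (cases "x = z")
    case True
    then show ?thesis using classical_refl[OF c(1) z] by simp
  next
    case False
    obtain a b where ab: "x = (a, b)" by (cases x)
    have lt: "a < fst z" "b < snd z" using x(2) False unfolding ab lessZ_def by auto
    show ?thesis
    proof (rule ccontr)
      assume "(x, z) \<notin> R"
      then have "strict R z x" using strict_if_not_weak[OF c(1) x(1) z] by blast
      then obtain e where e: "e > 0" "\<forall>y\<in>Zset. dist y x < e \<longrightarrow> strict R z y"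
        using strict_below_nbhd[OF c(1) z] by blast
      txt \<open>Raising the quality of x slightly keeps it below z, makes it strictly S-better than z
        and, by openness, still strictly R-worse: a separation that was ruled out.\<close>
      define d where "d = min (e / 2) ((snd z - b) / 2)"
      have "0 < d" "d \<le> e / 2" "d \<le> (snd z - b) / 2" using e lt by (auto simp: d_def min_def)
      then have d: "b < b + d" "b + d < snd z" "dist (a, b + d) x < e"
        using e unfolding ab by (auto simp: dist_Pair_Pair dist_real_def)
      have x': "(a, b + d) \<in> Zset" using x(1) z d unfolding ab by (cases z) auto
      have "lessZ (a, b + d) z" using lt d unfolding lessZ_def by auto
      moreover have "strict R z (a, b + d)" using e d x' by blast
      moreover have "strict S (a, b + d) z"
        using strict_weak_trans[OF c(2) classical_prefers_higher_q[OF c(2) _ x' d(1)]] x ab by auto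
      ultimately have "separates S R z" unfolding separates_def using x' by blast
      moreover have "0 < fst z" "0 < snd z" using lt x(1) unfolding ab by auto
      ultimately show False using never z by blast
    qed
  qed
  then show "x \<in> box z \<inter> {x. (x, z) \<in> R}" using \<open>x \<in> box z \<inter> _\<close> by blast
qed

lemma prec_total:
  assumes c: "classical R" "classical S" and sc: "single_crossing R S" and "R \<noteq> S"
  shows "prec R S \<or> prec S R"
proof -
  define Q :: "zbundle set" where "Q = {0<..} \<times> {0<..1}"
  have Q: "z \<in> Q \<longleftrightarrow> z \<in> Zset \<and> 0 < fst z \<and> 0 < snd z" for z
    unfolding Q_def by (cases z) auto
  have exactly_one: "(separates R S z \<or> separates S R z) \<and> \<not> (separates R S z \<and> separates S R z)"
    if zQ: "z \<in> Q" for z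
  proof -
    obtain a b where "z = (a, b)" "(a, b) \<in> Zset" "0 < a" "0 < b"
      using zQ unfolding Q_def by auto
    then show ?thesis using separates_either[OF c sc] not_separates_both[OF c sc] by blast
  qed
  have nbhd: "\<exists>e>0. \<forall>y\<in>Q. dist y z < e \<longrightarrow> separates R' S' y"
    if "classical R'" "classical S'" "z \<in> Q" "separates R' S' z" for R' S' z
    using separates_nbhd[OF that(1,2) _ that(4)] that(3) Q by blast
  have "(\<forall>z\<in>Q. separates R S z) \<or> (\<forall>z\<in>Q. separates S R z)"
  proof (rule connected_pred_split)
    show "connected Q" unfolding Q_def by (intro connected_Times) auto
  qed (use exactly_one nbhd[OF c] nbhd[OF c(2,1)] in blast)+
  then have "(\<forall>z\<in>Q. \<not> separates S R z) \<or> (\<forall>z\<in>Q. \<not> separates R S z)"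
    using exactly_one by blast
  then show ?thesis
    using prec_if_not_separates[OF c \<open>R \<noteq> S\<close>] prec_if_not_separates[OF c(2,1) \<open>R \<noteq> S\<close>[symmetric]] Q
    by blast
qed

lemma prec_asym:
  assumes c: "classical R" "classical S" and sc: "single_crossing R S" and "prec R S"
  shows "\<not> prec S R"
proof
  assume "prec S R"
  have z: "(1, 1 / 2) \<in> Zset" by simp
  show False
    using separates_either[OF c sc z] not_separates_if_prec[OF \<open>prec R S\<close> z]
      not_separates_if_prec[OF \<open>prec S R\<close> z] by auto
qed

lemma prec_trans: "prec R S \<Longrightarrow> prec S T \<Longrightarrow> R \<noteq> T \<Longrightarrow> prec R T"
  unfolding prec_def by blast

section \<open>Rich single-crossing domains\<close>

lemma
  assumes "rich_single_crossing D" and "R \<in> D" and "S \<in> D"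
  shows rich_single_crossing_classical: "classical R"
    and rich_single_crossing_single_crossing: "R \<noteq> S \<Longrightarrow> single_crossing R S"
  using assms unfolding rich_single_crossing_def by blast+

lemma rich_single_crossing_indiff:
  "rich_single_crossing D \<Longrightarrow> (t1, q1) \<in> Zset \<Longrightarrow> (t2, q2) \<in> Zset \<Longrightarrow> t1 < t2 \<Longrightarrow> q1 < q2
    \<Longrightarrow> \<exists>R\<in>D. indiff R (t1, q1) (t2, q2)"
  unfolding rich_single_crossing_def by blast

lemma rich_single_crossing_strict_linorder:
  assumes D: "rich_single_crossing D"
  shows "strict_linorder_on D prec"
  unfolding strict_linorder_on_def
proof (intro conjI ballI impI)
  show "\<not> prec R R" for R unfolding prec_def by blast
next
  fix R S T assume "R \<in> D" "S \<in> D" "T \<in> D" "prec R S" "prec S T"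
  moreover have "\<not> prec S R"
    using prec_asym rich_single_crossing_classical rich_single_crossing_single_crossing
      D calculation unfolding prec_def by metis
  ultimately show "prec R T" using prec_trans by blast
next
  fix R S assume "R \<in> D" "S \<in> D" "R \<noteq> S"
  then show "prec R S \<or> prec S R"
    using prec_total rich_single_crossing_classical rich_single_crossing_single_crossing D by blast
qed

lemma rich_single_crossing_no_greatest:
  assumes D: "rich_single_crossing D" and "R \<in> D"
  shows "\<exists>L\<in>D. prec R L"
proof -
  have c: "classical R" using rich_single_crossing_classical[OF D \<open>R \<in> D\<close> \<open>R \<in> D\<close>] .
  define z :: zbundle where "z = (1, 1 / 2)"
  have z: "z \<in> Zset" unfolding z_def by simp
  have "strict R (1 / 2, 1 / 2) z"
    unfolding z_def using classical_prefers_lower_t[OF c, of "1 / 2" "1 / 2" 1] by simp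
  then obtain e where e: "e > 0" "\<forall>y\<in>Zset. dist y (1 / 2, 1 / 2) < e \<longrightarrow> strict R y z"
    using strict_above_nbhd[OF c z] by blast
  define d :: real where "d = min (e / 2) (1 / 4)"
  have d: "0 < d" "d < e" "d \<le> 1 / 4" using e by (auto simp: d_def min_def)
  define x :: zbundle where "x = (1 / 2, 1 / 2 - d)"
  have x: "x \<in> Zset" "x \<in> box z" using d unfolding box_def x_def z_def lessZ_def by auto
  have "dist x (1 / 2, 1 / 2) < e" using d unfolding x_def by (simp add: dist_Pair_Pair dist_real_def)
  then have xR: "(x, z) \<in> R" using e x unfolding strict_def by blast
  txt \<open>Richness supplies an L whose indifference curve through z passes strictly to the left of x.\<close>
  obtain L where L: "L \<in> D" "indiff L (1 / 4, 1 / 2 - d) z"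
    using rich_single_crossing_indiff[OF D, of "1 / 4" "1 / 2 - d" 1 "1 / 2"] d unfolding z_def by auto
  have cL: "classical L" using rich_single_crossing_classical[OF D L(1) L(1)] .
  have "strict L (1 / 4, 1 / 2 - d) x"
    unfolding x_def using classical_prefers_lower_t[OF cL, of "1 / 4" "1 / 2 - d" "1 / 2"] d by simp
  then have xL: "(x, z) \<notin> L" using L(2) classical_trans[OF cL] unfolding strict_def indiff_def by blast
  have "L \<noteq> R" "\<not> prec L R" using xR xL x z unfolding prec_def by auto
  then show ?thesis
    using strict_linorder_on_total[OF rich_single_crossing_strict_linorder[OF D] \<open>R \<in> D\<close> L(1)] L(1)
    by blast
qed

lemma rich_single_crossing_no_least:
  assumes D: "rich_single_crossing D" and "R \<in> D"
  shows "\<exists>L\<in>D. prec L R"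
proof -
  have c: "classical R" using rich_single_crossing_classical[OF D \<open>R \<in> D\<close> \<open>R \<in> D\<close>] .
  define z :: zbundle where "z = (1, 1 / 2)"
  have z: "z \<in> Zset" unfolding z_def by simp
  have "strict R z (1, 1 / 4)"
    unfolding z_def using classical_prefers_higher_q[OF c, of 1 "1 / 4" "1 / 2"] by simp
  then obtain e where e: "e > 0" "\<forall>y\<in>Zset. dist y (1, 1 / 4) < e \<longrightarrow> strict R z y"
    using strict_below_nbhd[OF c z] by blast
  define d :: real where "d = min (e / 2) (1 / 2)"
  have d: "0 < d" "d < e" "d \<le> 1 / 2" using e by (auto simp: d_def min_def)
  define x :: zbundle where "x = (1 - d, 1 / 4)"
  have x: "x \<in> Zset" "x \<in> box z" using d unfolding box_def x_def z_def lessZ_def by auto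
  have "dist x (1, 1 / 4) < e" using d unfolding x_def by (simp add: dist_Pair_Pair dist_real_def)
  then have xR: "(x, z) \<notin> R" using e x unfolding strict_def by blast
  obtain L where L: "L \<in> D" "indiff L x z"
    using rich_single_crossing_indiff[OF D, of "1 - d" "1 / 4" 1 "1 / 2"] d unfolding x_def z_def by auto
  then have xL: "(x, z) \<in> L" unfolding indiff_def by blast
  have "L \<noteq> R" "\<not> prec R L" using xR xL x z unfolding prec_def by auto
  then show ?thesis
    using strict_linorder_on_total[OF rich_single_crossing_strict_linorder[OF D] \<open>R \<in> D\<close> L(1)] L(1)
    by blast
qed

lemma order_top_eq: "order_top D = order_topology_on D prec"
  unfolding order_top_def order_topology_on_def ..

lemma is_inf_prec_iff: "is_inf_prec D U R \<longleftrightarrow> is_inf_on D prec U R"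
  unfolding is_inf_prec_def is_inf_on_def ..

lemma is_sup_prec_iff: "is_sup_prec D U R \<longleftrightarrow> is_inf_on D (\<lambda>x y. prec y x) U R"
  unfolding is_sup_prec_def is_inf_on_def by blast

theorem mainTheorem2:
  fixes D U :: "pref set"
  assumes "rich_single_crossing D" and "U \<subseteq> D"
  shows "(\<forall>R0. is_inf_prec D U R0 \<longrightarrow> R0 \<in> order_top D closure_of U) \<and>
         (\<forall>R0. is_sup_prec D U R0 \<longrightarrow> R0 \<in> order_top D closure_of U)"
proof -
  have lin: "strict_linorder_on D prec"
    using rich_single_crossing_strict_linorder[OF assms(1)] .
  have top: "order_top D = order_topology_on D prec"
    "order_top D = order_topology_on D (\<lambda>x y. prec y x)"
    using order_top_eq order_topology_on_converse by metis+
  have "R0 \<in> order_top D closure_of U" if "is_inf_prec D U R0" for R0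
    using inf_in_order_closure[OF lin _ assms(2)] rich_single_crossing_no_greatest[OF assms(1)] that
    unfolding is_inf_prec_iff top(1) by blast
  moreover have "R0 \<in> order_top D closure_of U" if "is_sup_prec D U R0" for R0
    using inf_in_order_closure[OF strict_linorder_on_converse[OF lin] _ assms(2)]
      rich_single_crossing_no_least[OF assms(1)] that
    unfolding is_sup_prec_iff top(2) by blast
  ultimately show ?thesis by blast
qed

end
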